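(* Let $T$ be a text of length $n$ with suffix tree $\mathcal T$, and let $d=\lceil\log_2 n\rceil$. The total number of heavy Weiner links whose source is a w-special node of $\mathcal T$ is $O(n/d)$.
   Context: For a node $v$ of the suffix tree $\mathcal T$ whose root-to-node path spells the string $p$, and a symbol $c$ such that $cp$ occurs in $T$, the Weiner link $\mathrm{wlink}(v,c)$ goes from $v$ (its source) to the locus $u$ of $cp$ in $\mathcal T$ (the highest node whose path label has $cp$ as a prefix); $c$ is its label. A Weiner link is heavy if its target node has at least $d$ leaf descendants, and light otherwise. A node $v$ is w-special if at least two heavy Weiner links have $v$ as source. *)

theory Defs
  imports Complex_Main "HOL-Library.Sublist"
begin

text \<open>Texts are lists over the alphabet nat (any alphabet embeds). Nodes of the
suffix tree are identified with their path labels (strings).\<close>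

definition right_maximal :: "nat list \<Rightarrow> nat list \<Rightarrow> bool" where
  "right_maximal T p \<longleftrightarrow>
     (\<exists>a b. a \<noteq> b \<and> sublist (p @ [a]) T \<and> sublist (p @ [b]) T)"

text \<open>Nodes of the suffix tree: the root, the internal (branching) nodes, and the leaves
(non-empty suffixes of T; T is assumed to end with a unique terminator).\<close>
definition st_node :: "nat list \<Rightarrow> nat list \<Rightarrow> bool" where
  "st_node T p \<longleftrightarrow> p = [] \<or> right_maximal T p \<or> (p \<noteq> [] \<and> suffix p T)"

definition st_leaf :: "nat list \<Rightarrow> nat list \<Rightarrow> bool" where
  "st_leaf T p \<longleftrightarrow> st_node T p \<and> \<not> (\<exists>q. st_node T q \<and> strict_prefix p q)"

definition leaf_desc :: "nat list \<Rightarrow> nat list \<Rightarrow> nat" where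
  "leaf_desc T p = card {q. st_leaf T q \<and> prefix p q}"

definition locus :: "nat list \<Rightarrow> nat list \<Rightarrow> nat list" where
  "locus T s = (SOME u. st_node T u \<and> prefix s u \<and>
                  (\<forall>w. st_node T w \<and> prefix s w \<longrightarrow> length u \<le> length w))"

text \<open>Weiner link wlink(v,c), represented by the pair (v,c).\<close>
definition wlink :: "nat list \<Rightarrow> nat list \<Rightarrow> nat \<Rightarrow> bool" where
  "wlink T v c \<longleftrightarrow> st_node T v \<and> sublist (c # v) T"

definition heavy_wlink :: "nat list \<Rightarrow> nat \<Rightarrow> nat list \<Rightarrow> nat \<Rightarrow> bool" where
  "heavy_wlink T d v c \<longleftrightarrow> wlink T v c \<and> leaf_desc T (locus T (c # v)) \<ge> d"

definition w_special :: "nat list \<Rightarrow> nat \<Rightarrow> nat list \<Rightarrow> bool" where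
  "w_special T d v \<longleftrightarrow> st_node T v \<and>
     (\<exists>c1 c2. c1 \<noteq> c2 \<and> heavy_wlink T d v c1 \<and> heavy_wlink T d v c2)"

definition unique_terminator :: "nat list \<Rightarrow> bool" where
  "unique_terminator T \<longleftrightarrow> T \<noteq> [] \<and> last T \<notin> set (butlast T)"

end

theory Submission
  imports Defs
begin

text \<open>Call a string heavy if it has at least \<open>d\<close> occurrences in \<open>T\<close>, and consider the tree
of heavy strings in which the children of \<open>w\<close> are its heavy left extensions \<open>cw\<close>.
A heavy Weiner link out of a w-special node \<open>v\<close> leads to a heavy child of \<open>v\<close>, and \<open>v\<close> has
at least two of them; so the number of such links is at most twice the total excess
\<open>\<Sum> (#heavy children - 1)\<close> over branching nodes. The occurrences of distinct children of \<open>w\<close>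
are disjoint and, after dropping the first symbol, occurrences of \<open>w\<close>. An induction over
the tree therefore shows that the subtree below a heavy \<open>w\<close> with excess \<open>\<Phi>\<close> needs at least
\<open>d (\<Phi> + 1)\<close> occurrences of \<open>w\<close>; at the root this gives \<open>\<Phi> \<le> (n + 1) / d\<close>.\<close>

definition occs :: "nat list \<Rightarrow> nat list \<Rightarrow> nat list set" where
  "occs T w = {q. suffix q T \<and> prefix w q}"

lemma finite_occs [simp]: "finite (occs T w)"
  by (rule finite_subset[of _ "set (suffixes T)"]) (auto simp: occs_def)

lemma card_occs_Nil: "card (occs T []) = Suc (length T)"
proof -
  have "occs T [] = set (suffixes T)" by (auto simp: occs_def)
  then show ?thesis by simp
qed

lemma sublist_if_mem_occs: "q \<in> occs T w \<Longrightarrow> sublist w T"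
  unfolding occs_def by (auto intro: sublist_order.order_trans[OF prefix_imp_sublist suffix_imp_sublist])

lemma inj_on_length_suffixes: "inj_on length {q. suffix q T}"
  by (rule inj_onI) (metis suffix_length_suffix order_refl suffix_order.antisym mem_Collect_eq)

lemma card_occs_antimono:
  assumes "suffix u u'"
  shows "card (occs T u') \<le> card (occs T u)"
proof -
  obtain x where u': "u' = x @ u" using assms by (auto simp: suffix_def)
  have "inj_on (drop (length x)) (occs T u')"
  proof (rule inj_onI)
    fix a b assume a: "a \<in> occs T u'" and b: "b \<in> occs T u'"
      and "drop (length x) a = drop (length x) b"
    moreover have "length x \<le> length a" "length x \<le> length b"
      using a b u' by (auto simp: occs_def prefix_def)
    ultimately have "length a = length b" by (metis le_add_diff_inverse length_drop)
    then show "a = b"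
      using a b inj_on_length_suffixes[of T] unfolding occs_def inj_on_def by blast
  qed
  moreover have "drop (length x) ` occs T u' \<subseteq> occs T u"
    using u' by (auto simp: occs_def prefix_def intro: suffix_order.trans[OF suffix_drop])
  ultimately show ?thesis by (rule card_inj_on_le) simp
qed

lemma sum_card_occs_Cons_le:
  assumes "finite C"
  shows "(\<Sum>c\<in>C. card (occs T (c # w))) \<le> card (occs T w)"
proof -
  let ?U = "\<Union>c\<in>C. occs T (c # w)"
  have "(\<Sum>c\<in>C. card (occs T (c # w))) = card ?U"
    by (rule card_UN_disjoint[symmetric, OF assms]) (simp, auto simp: occs_def prefix_def)
  also have "\<dots> \<le> card (occs T w)"
  proof (rule card_inj_on_le)
    show "inj_on tl ?U"
    proof (rule inj_onI)
      fix a b assume a: "a \<in> ?U" and b: "b \<in> ?U" and "tl a = tl b"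
      moreover have "a \<noteq> []" "b \<noteq> []" using a b by (auto simp: occs_def prefix_def)
      ultimately have "length a = length b" by (cases a; cases b) auto
      then show "a = b"
        using a b inj_on_length_suffixes[of T] unfolding occs_def inj_on_def by blast
    qed
    show "tl ` ?U \<subseteq> occs T w"
      by (auto simp: occs_def prefix_def intro: suffix_order.trans[OF suffix_tl])
  qed simp
  finally show ?thesis .
qed

definition heavy_exts :: "nat list \<Rightarrow> nat \<Rightarrow> nat list \<Rightarrow> nat set" where
  "heavy_exts T d v = {c. d \<le> card (occs T (c # v))}"

definition branching :: "nat list \<Rightarrow> nat \<Rightarrow> nat list set" where
  "branching T d = {v. 2 \<le> card (heavy_exts T d v)}"

definition excess :: "nat list \<Rightarrow> nat \<Rightarrow> nat list \<Rightarrow> nat" where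
  "excess T d w = (\<Sum>v\<in>{v \<in> branching T d. suffix w v}. card (heavy_exts T d v) - 1)"

lemma sublist_if_heavy:
  assumes "0 < d" and "d \<le> card (occs T w)"
  shows "sublist w T"
proof -
  obtain q where "q \<in> occs T w" using assms card_gt_0_iff by fastforce
  then show ?thesis by (rule sublist_if_mem_occs)
qed

lemma heavy_exts_nonempty_if_branching: "v \<in> branching T d \<Longrightarrow> heavy_exts T d v \<noteq> {}"
  by (auto simp: branching_def)

lemma finite_heavy_exts: "0 < d \<Longrightarrow> finite (heavy_exts T d v)"
proof (rule finite_subset[of _ "set T"])
  assume "0 < d"
  then show "heavy_exts T d v \<subseteq> set T"
    by (auto simp: heavy_exts_def dest!: sublist_if_heavy set_mono_sublist)
qed simp

lemma finite_branching: "0 < d \<Longrightarrow> finite (branching T d)"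
proof (rule finite_subset[of _ "set (sublists T)"])
  assume d: "0 < d"
  show "branching T d \<subseteq> set (sublists T)"
  proof
    fix v assume "v \<in> branching T d"
    then obtain c where "c \<in> heavy_exts T d v" using heavy_exts_nonempty_if_branching by blast
    then have "sublist (c # v) T" using d by (auto simp: heavy_exts_def intro: sublist_if_heavy)
    then show "v \<in> set (sublists T)"
      by (auto intro: sublist_order.order_trans[OF sublist_append_leftI[of v "[c]"]])
  qed
qed simp

lemma branching_below:
  "{v \<in> branching T d. suffix w v} =
     ({w} \<inter> branching T d) \<union> (\<Union>c\<in>heavy_exts T d w. {v \<in> branching T d. suffix (c # w) v})"
proof (intro set_eqI iffI)
  fix v assume v: "v \<in> {v \<in> branching T d. suffix w v}"
  show "v \<in> ({w} \<inter> branching T d) \<union> (\<Union>c\<in>heavy_exts T d w. {v \<in> branching T d. suffix (c # w) v})"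
  proof (cases "v = w")
    case False
    obtain y where "v = y @ w" using v unfolding suffix_def by blast
    with False obtain x c where "v = x @ c # w" by (cases y rule: rev_exhaust) auto
    then have cw: "suffix (c # w) v" by (simp add: suffix_def)
    obtain c' where "c' \<in> heavy_exts T d v" using v heavy_exts_nonempty_if_branching by blast
    moreover have "card (occs T (c' # v)) \<le> card (occs T (c # w))"
      using cw by (simp add: card_occs_antimono suffix_ConsI)
    ultimately have "c \<in> heavy_exts T d w" by (simp add: heavy_exts_def)
    then show ?thesis using v cw by blast
  qed (use v in blast)
next
  fix v
  assume "v \<in> ({w} \<inter> branching T d) \<union> (\<Union>c\<in>heavy_exts T d w. {v \<in> branching T d. suffix (c # w) v})"
  then show "v \<in> {v \<in> branching T d. suffix w v}" by (blast dest: suffix_ConsD)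
qed

lemma excess_unfold:
  assumes d: "0 < d"
  shows "excess T d w =
    (if w \<in> branching T d then card (heavy_exts T d w) - 1 else 0) +
    (\<Sum>c\<in>heavy_exts T d w. excess T d (c # w))"
proof -
  let ?f = "\<lambda>v. card (heavy_exts T d v) - 1"
  let ?B = "\<lambda>c. {v \<in> branching T d. suffix (c # w) v}"
  have finB: "finite (branching T d)" using finite_branching[OF d] .
  have not_self: "\<not> suffix (c # w) w" for c using suffix_length_le[of "c # w" w] by auto
  have distinct: "c = c'" if "suffix (c # w) v" "suffix (c' # w) v" for c c' v
    using inj_onD[OF inj_on_length_suffixes[of v], of "c # w" "c' # w"] that by simp
  have "excess T d w = sum ?f (({w} \<inter> branching T d) \<union> (\<Union>c\<in>heavy_exts T d w. ?B c))"
    unfolding excess_def by (simp only: branching_below[of T d w])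
  also have "\<dots> = sum ?f ({w} \<inter> branching T d) + sum ?f (\<Union>c\<in>heavy_exts T d w. ?B c)"
  proof (rule sum.union_disjoint)
    show "finite ({w} \<inter> branching T d)" using finB by simp
    show "finite (\<Union>c\<in>heavy_exts T d w. ?B c)" by (rule finite_subset[OF _ finB]) blast
    show "({w} \<inter> branching T d) \<inter> (\<Union>c\<in>heavy_exts T d w. ?B c) = {}" using not_self by blast
  qed
  also have "sum ?f ({w} \<inter> branching T d) =
      (if w \<in> branching T d then card (heavy_exts T d w) - 1 else 0)"
    by simp
  also have "sum ?f (\<Union>c\<in>heavy_exts T d w. ?B c) = (\<Sum>c\<in>heavy_exts T d w. excess T d (c # w))"
    unfolding excess_def
  proof (rule sum.UNION_disjoint)
    show "finite (heavy_exts T d w)" using finite_heavy_exts[OF d] .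
    show "\<forall>c\<in>heavy_exts T d w. finite (?B c)" using finB by simp
    show "\<forall>c\<in>heavy_exts T d w. \<forall>c'\<in>heavy_exts T d w. c \<noteq> c' \<longrightarrow> ?B c \<inter> ?B c' = {}"
      using distinct by blast
  qed
  finally show ?thesis .
qed

lemma excess_eq_0_if_no_heavy_exts:
  "0 < d \<Longrightarrow> heavy_exts T d w = {} \<Longrightarrow> excess T d w = 0"
  using excess_unfold[of d T w] by (simp add: branching_def)

lemma excess_Suc_le:
  assumes d: "0 < d" and "heavy_exts T d w \<noteq> {}"
  shows "excess T d w + 1 \<le> (\<Sum>c\<in>heavy_exts T d w. excess T d (c # w)) + card (heavy_exts T d w)"
proof -
  have "1 \<le> card (heavy_exts T d w)"
    using assms finite_heavy_exts[OF d] by (simp add: Suc_le_eq card_gt_0_iff)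
  then show ?thesis using excess_unfold[OF d, of T w]
    by (cases "w \<in> branching T d") (simp_all add: branching_def)
qed

text \<open>The induction runs over left extensions, which stay sublists of \<open>T\<close> while heavy;
hence the measure \<open>length T - length w\<close>.\<close>
lemma excess_bound:
  assumes d: "0 < d" and heavy: "d \<le> card (occs T w)"
  shows "d * (excess T d w + 1) \<le> card (occs T w)"
  using heavy
proof (induction w rule: measure_induct_rule[of "\<lambda>w. length T - length w"])
  case (less w)
  let ?K = "heavy_exts T d w"
  have IH: "d * (excess T d (c # w) + 1) \<le> card (occs T (c # w))" if c: "c \<in> ?K" for c
  proof (rule less.IH)
    show heavy: "d \<le> card (occs T (c # w))" using c by (simp add: heavy_exts_def)
    have "length (c # w) \<le> length T" using sublist_if_heavy[OF d heavy] by (rule sublist_length_le)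
    then show "length T - length (c # w) < length T - length w" by simp
  qed
  show ?case
  proof (cases "?K = {}")
    case True
    then show ?thesis using excess_eq_0_if_no_heavy_exts[OF d] less.prems by simp
  next
    case False
    have "d * (excess T d w + 1) \<le> d * ((\<Sum>c\<in>?K. excess T d (c # w)) + card ?K)"
      using excess_Suc_le[OF d False] by (rule mult_le_mono2)
    also have "\<dots> = (\<Sum>c\<in>?K. d * (excess T d (c # w) + 1))"
      by (simp add: sum_distrib_left sum.distrib algebra_simps)
    also have "\<dots> \<le> (\<Sum>c\<in>?K. card (occs T (c # w)))" by (rule sum_mono) (rule IH)
    also have "\<dots> \<le> card (occs T w)" by (rule sum_card_occs_Cons_le[OF finite_heavy_exts[OF d]])
    finally show ?thesis .
  qed
qed

lemma suffix_if_st_leaf: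
  assumes "st_leaf T q"
  shows "suffix q T"
proof (rule ccontr)
  assume not_suffix: "\<not> suffix q T"
  then have "right_maximal T q" using assms by (auto simp: st_leaf_def st_node_def)
  then obtain a p s where T: "T = p @ (q @ [a]) @ s" by (auto simp: right_maximal_def sublist_def)
  then have "st_node T (q @ a # s)" by (auto simp: st_node_def suffix_def)
  moreover have "strict_prefix q (q @ a # s)" by (simp add: strict_prefix_def)
  ultimately show False using assms by (auto simp: st_leaf_def)
qed

lemma prefix_locus:
  assumes "sublist s T" and "s \<noteq> []"
  shows "prefix s (locus T s)"
proof -
  obtain p r where "T = p @ s @ r" using assms by (auto simp: sublist_def)
  then have "st_node T (s @ r) \<and> prefix s (s @ r)" using assms by (auto simp: st_node_def suffix_def)
  then have "\<exists>u. st_node T u \<and> prefix s u \<and>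
      (\<forall>w. st_node T w \<and> prefix s w \<longrightarrow> length u \<le> length w)"
    using ex_has_least_nat[of "\<lambda>u. st_node T u \<and> prefix s u" _ length] by blast
  from someI_ex[OF this] show ?thesis unfolding locus_def by blast
qed

lemma heavy_ext_if_heavy_wlink:
  assumes "heavy_wlink T d v c"
  shows "c \<in> heavy_exts T d v"
proof -
  have sub: "sublist (c # v) T" and heavy: "d \<le> leaf_desc T (locus T (c # v))"
    using assms by (auto simp: heavy_wlink_def wlink_def)
  have "{q. st_leaf T q \<and> prefix (locus T (c # v)) q} \<subseteq> occs T (c # v)"
    using prefix_locus[OF sub] by (auto simp: occs_def intro: suffix_if_st_leaf prefix_order.trans)
  then have "leaf_desc T (locus T (c # v)) \<le> card (occs T (c # v))"
    unfolding leaf_desc_def by (rule card_mono[OF finite_occs])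
  then show ?thesis using heavy by (simp add: heavy_exts_def)
qed

lemma heavy_wlinks_of_w_special_subset:
  assumes d: "0 < d"
  shows "{(v, c). w_special T d v \<and> heavy_wlink T d v c} \<subseteq> Sigma (branching T d) (heavy_exts T d)"
proof clarify
  fix v c assume ws: "w_special T d v" and hw: "heavy_wlink T d v c"
  obtain c1 c2 where "c1 \<noteq> c2" "heavy_wlink T d v c1" "heavy_wlink T d v c2"
    using ws by (auto simp: w_special_def)
  then have "{c1, c2} \<subseteq> heavy_exts T d v" by (auto intro: heavy_ext_if_heavy_wlink)
  then have "card {c1, c2} \<le> card (heavy_exts T d v)" by (rule card_mono[OF finite_heavy_exts[OF d]])
  with \<open>c1 \<noteq> c2\<close> have "v \<in> branching T d" by (simp add: branching_def)
  moreover have "c \<in> heavy_exts T d v" using hw by (rule heavy_ext_if_heavy_wlink)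
  ultimately show "v \<in> branching T d \<and> c \<in> heavy_exts T d v" ..
qed

lemma card_Sigma_branching_le:
  assumes d: "0 < d"
  shows "card (Sigma (branching T d) (heavy_exts T d)) \<le> 2 * excess T d []"
proof -
  have "card (Sigma (branching T d) (heavy_exts T d)) = (\<Sum>v\<in>branching T d. card (heavy_exts T d v))"
    using finite_branching[OF d] finite_heavy_exts[OF d] by (simp add: card_SigmaI)
  also have "\<dots> \<le> (\<Sum>v\<in>branching T d. 2 * (card (heavy_exts T d v) - 1))"
    by (rule sum_mono) (simp add: branching_def)
  also have "\<dots> = 2 * excess T d []" by (simp add: excess_def sum_distrib_left)
  finally show ?thesis .
qed

lemma card_heavy_wlinks_of_w_special:
  assumes d: "0 < d" and "d \<le> Suc (length T)"
  shows "d * card {(v, c). w_special T d v \<and> heavy_wlink T d v c} \<le> 2 * Suc (length T)"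
proof -
  let ?W = "{(v, c). w_special T d v \<and> heavy_wlink T d v c}"
  have "card ?W \<le> card (Sigma (branching T d) (heavy_exts T d))"
    by (rule card_mono[OF _ heavy_wlinks_of_w_special_subset[OF d]])
      (simp add: finite_branching finite_heavy_exts d)
  also have "\<dots> \<le> 2 * excess T d []" by (rule card_Sigma_branching_le[OF d])
  finally have "d * card ?W \<le> d * (2 * excess T d [])" by (rule mult_le_mono2)
  also have "\<dots> \<le> 2 * Suc (length T)"
    using excess_bound[OF d, of T "[]"] assms(2) by (simp add: card_occs_Nil)
  finally show ?thesis .
qed

lemma nat_ceiling_log2_bounds:
  assumes "2 \<le> n"
  shows "0 < nat \<lceil>log 2 (real n)\<rceil>" and "nat \<lceil>log 2 (real n)\<rceil> \<le> n"
proof -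
  have "1 \<le> log 2 (real n)" using assms by simp
  then show "0 < nat \<lceil>log 2 (real n)\<rceil>" by linarith
  have "real n < 2 powr real n" using less_exp[of n] by (simp add: powr_realpow)
  then have "log 2 (real n) < real n" using assms by (simp add: log_less_iff)
  then show "nat \<lceil>log 2 (real n)\<rceil> \<le> n" by linarith
qed

theorem proposition4:
  shows "\<exists>C::real. C > 0 \<and> (\<forall>T::nat list. \<forall>n d.
           unique_terminator T \<longrightarrow> n = length T \<longrightarrow> n \<ge> 2 \<longrightarrow>
           d = nat \<lceil>log 2 (real n)\<rceil> \<longrightarrow>
           real (card {(v, c). w_special T d v \<and> heavy_wlink T d v c})
             \<le> C * real n / real d)"
proof (intro exI[of _ 3] conjI allI impI)
  fix T :: "nat list" and n d
  assume n: "n = length T" "2 \<le> n" and d: "d = nat \<lceil>log 2 (real n)\<rceil>"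
  let ?c = "card {(v, c). w_special T d v \<and> heavy_wlink T d v c}"
  have "0 < d" "d \<le> n" using nat_ceiling_log2_bounds[OF n(2)] d by simp_all
  then have "d * ?c \<le> 2 * Suc n" using card_heavy_wlinks_of_w_special n(1) by simp
  then have "real d * real ?c \<le> 3 * real n" using n(2) by (simp flip: of_nat_mult)
  then show "real ?c \<le> 3 * real n / real d" using \<open>0 < d\<close> by (simp add: field_simps)
qed simp

end
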